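(* Let $\mathcal H$ be a complex Hilbert space, let $\mathbf A=(A_1,\dots,A_m)$ be an $m$-tuple of bounded self-adjoint operators on $\mathcal H$, and let $k$ be a positive integer. If $\operatorname{cl}(\Lambda_{\hat k}(\mathbf A))\neq\emptyset$ for some integer $\hat k\ge(m+2)k$, then $\operatorname{cl}(\Lambda_k(\mathbf A))$ is star-shaped and contains the convex set $\operatorname{conv}\operatorname{cl}(\Lambda_{\hat k}(\mathbf A))$, and every element of $\operatorname{conv}\operatorname{cl}(\Lambda_{\hat k}(\mathbf A))$ is a star center of $\operatorname{cl}(\Lambda_k(\mathbf A))$.
   Context: For an $m$-tuple $\mathbf A=(A_1,\dots,A_m)$ of bounded self-adjoint operators on a complex Hilbert space $\mathcal H$ and a positive integer $k$, the joint rank-$k$ numerical range is $\Lambda_k(\mathbf A)=\{(a_1,\dots,a_m)\in\mathbb R^m:$ there is an orthogonal projection $P$ of rank $k$ on $\mathcal H$ with $PA_jP=a_jP$ for $j=1,\dots,m\}$. $\operatorname{cl}$ denotes closure in $\mathbb R^m$ and $\operatorname{conv}$ convex hull. A set $S\subseteq\mathbb R^m$ is star-shaped with star center $\mathbf c\in S$ if for every $\mathbf b\in S$ the line segment joining $\mathbf c$ and $\mathbf b$ lies in $S$. *)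

theory Defs
  imports "HOL-Analysis.Analysis"
begin

class complex_vector = real_vector +
  fixes scaleC :: "complex \<Rightarrow> 'a \<Rightarrow> 'a" (infixr "*\<^sub>C" 75)
  assumes scaleC_add_right: "scaleC a (x + y) = scaleC a x + scaleC a y"
    and scaleC_add_left: "scaleC (a + b) x = scaleC a x + scaleC b x"
    and scaleC_scaleC: "scaleC a (scaleC b x) = scaleC (a * b) x"
    and scaleC_one: "scaleC 1 x = x"
    and scaleR_scaleC: "scaleR r x = scaleC (complex_of_real r) x"

class complex_inner = complex_vector + real_normed_vector +
  fixes cinner :: "'a \<Rightarrow> 'a \<Rightarrow> complex"
  assumes cinner_commute: "cinner x y = cnj (cinner y x)"
    and cinner_add_left: "cinner (x + y) z = cinner x z + cinner y z"
    and cinner_scaleC_left: "cinner (scaleC r x) y = cnj r * cinner x y"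
    and cinner_self_real_nonneg: "Im (cinner x x) = 0 \<and> 0 \<le> Re (cinner x x)"
    and cinner_eq_zero_iff: "cinner x x = 0 \<longleftrightarrow> x = 0"
    and norm_eq_sqrt_cinner: "norm x = sqrt (Re (cinner x x))"

text \<open>A complex Hilbert space is a type of class complex_inner together with complete_space.\<close>

definition clinear :: "('a::complex_vector \<Rightarrow> 'b::complex_vector) \<Rightarrow> bool" where
  "clinear T \<longleftrightarrow> (\<forall>x y. T (x + y) = T x + T y) \<and> (\<forall>c x. T (c *\<^sub>C x) = c *\<^sub>C T x)"

definition bounded_clinear_op :: "('a::complex_inner \<Rightarrow> 'a) \<Rightarrow> bool" where
  "bounded_clinear_op T \<longleftrightarrow> clinear T \<and> (\<exists>K. \<forall>x. norm (T x) \<le> K * norm x)"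

definition selfadjoint_op :: "('a::complex_inner \<Rightarrow> 'a) \<Rightarrow> bool" where
  "selfadjoint_op T \<longleftrightarrow> bounded_clinear_op T \<and> (\<forall>x y. cinner (T x) y = cinner x (T y))"

definition cspan_fin :: "'a::complex_vector set \<Rightarrow> 'a set" where
  "cspan_fin B = {\<Sum>b\<in>B. c b *\<^sub>C b | c. True}"

definition cindependent_fin :: "'a::complex_vector set \<Rightarrow> bool" where
  "cindependent_fin B \<longleftrightarrow> (\<forall>c. (\<Sum>b\<in>B. c b *\<^sub>C b) = 0 \<longrightarrow> (\<forall>b\<in>B. c b = 0))"

definition rank_proj :: "nat \<Rightarrow> ('a::complex_inner \<Rightarrow> 'a) \<Rightarrow> bool" where
  "rank_proj k P \<longleftrightarrow> selfadjoint_op P \<and> (\<forall>x. P (P x) = P x) \<and>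
     (\<exists>B. finite B \<and> card B = k \<and> cindependent_fin B \<and> range P = cspan_fin B)"

text \<open>Joint rank-k numerical range of an m-tuple of operators (m = CARD('m)).\<close>
definition joint_rank_k_nr :: "nat \<Rightarrow> ('m::finite \<Rightarrow> 'a::complex_inner \<Rightarrow> 'a) \<Rightarrow> (real^'m) set" where
  "joint_rank_k_nr k A = {a. \<exists>P. rank_proj k P \<and>
      (\<forall>j x. P (A j (P x)) = complex_of_real (a $ j) *\<^sub>C P x)}"

definition star_center :: "'a::real_vector set \<Rightarrow> 'a \<Rightarrow> bool" where
  "star_center S c \<longleftrightarrow> c \<in> S \<and> (\<forall>b\<in>S. closed_segment c b \<subseteq> S)"

definition star_shaped :: "'a::real_vector set \<Rightarrow> bool" where
  "star_shaped S \<longleftrightarrow> (\<exists>c. star_center S c)"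

end

theory Submission
  imports Defs
begin

text \<open>Let \<open>c \<in> \<Lambda>\<^bsub>khat\<^esub>(A)\<close> be witnessed by a projection \<open>P\<close> and \<open>b \<in> \<Lambda>\<^sub>k(A)\<close> by an
  orthonormal family \<open>w\<^sub>1, \<dots>, w\<^sub>k\<close>. The \<open>(m + 1) k \<le> khat - k\<close> vectors \<open>w\<^sub>i\<close>, \<open>A\<^sub>j w\<^sub>i\<close>
  leave room in the range of \<open>P\<close> for an orthonormal family \<open>u\<^sub>1, \<dots>, u\<^sub>k\<close> orthogonal to all
  of them. Then \<open>x\<^sub>i = \<surd>(1 - t) u\<^sub>i + \<surd>t w\<^sub>i\<close> is orthonormal and compresses each \<open>A\<^sub>j\<close> to
  \<open>(1 - t) c\<^sub>j + t b\<^sub>j\<close> times the identity, so the segment from \<open>c\<close> to \<open>b\<close> lies in \<open>\<Lambda>\<^sub>k(A)\<close>.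
  Since \<open>\<Lambda>\<^bsub>khat\<^esub>(A) \<subseteq> \<Lambda>\<^sub>k(A)\<close>, continuity makes every point of the closure of
  \<open>\<Lambda>\<^bsub>khat\<^esub>(A)\<close> a star center of the closure of \<open>\<Lambda>\<^sub>k(A)\<close>, and the star centers of any set
  form a convex set.\<close>

lemma scaleC_zero_left [simp]: "0 *\<^sub>C x = 0"
  by (metis of_real_0 scaleR_scaleC scaleR_zero_left)

lemma scaleC_zero_right [simp]: "a *\<^sub>C 0 = 0"
  by (metis add_cancel_right_right scaleC_add_right)

lemma scaleC_sum_right: "a *\<^sub>C sum f S = (\<Sum>i\<in>S. a *\<^sub>C f i)"
  by (induction S rule: infinite_finite_induct) (auto simp: scaleC_add_right)

lemma cinner_zero_left [simp]: "cinner 0 y = 0"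
  by (metis add_0 add_cancel_left_left cinner_add_left)

lemma cinner_zero_right [simp]: "cinner x 0 = 0"
  by (metis cinner_commute cinner_zero_left complex_cnj_zero)

lemma cnj_cinner [simp]: "cnj (cinner x y) = cinner y x"
  by (metis cinner_commute)

lemma cinner_eq_zero_sym: "cinner x y = 0 \<Longrightarrow> cinner y x = 0"
  by (metis cnj_cinner complex_cnj_zero)

lemma cinner_add_right: "cinner x (y + z) = cinner x y + cinner x z"
  by (metis cinner_add_left cinner_commute complex_cnj_add)

lemma cinner_scaleC_right: "cinner x (a *\<^sub>C y) = a * cinner x y"
  by (metis cinner_commute cinner_scaleC_left complex_cnj_cnj complex_cnj_mult)

lemma cinner_diff_right: "cinner x (y - z) = cinner x y - cinner x z"
  by (metis add_diff_cancel_right' cinner_add_right diff_add_cancel)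

lemma cinner_sum_left: "cinner (sum f S) x = (\<Sum>i\<in>S. cinner (f i) x)"
  by (induction S rule: infinite_finite_induct) (auto simp: cinner_add_left)

lemma cinner_sum_right: "cinner x (sum f S) = (\<Sum>i\<in>S. cinner x (f i))"
  by (induction S rule: infinite_finite_induct) (auto simp: cinner_add_right)

lemma cinner_real_combination:
  "cinner (complex_of_real a *\<^sub>C p + complex_of_real b *\<^sub>C q) (complex_of_real a *\<^sub>C r + complex_of_real b *\<^sub>C s)
   = complex_of_real (a * a) * cinner p r + complex_of_real (a * b) * cinner p s
     + complex_of_real (a * b) * cinner q r + complex_of_real (b * b) * cinner q s"
  by (simp add: cinner_add_left cinner_add_right cinner_scaleC_left cinner_scaleC_right)
    (simp add: algebra_simps)

lemma exists_real_scaleC_unit: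
  fixes x :: "'a::complex_inner"
  assumes "x \<noteq> 0"
  shows "\<exists>a. cinner (complex_of_real a *\<^sub>C x) (complex_of_real a *\<^sub>C x) = 1"
proof -
  define r where "r = Re (cinner x x)"
  have xx: "cinner x x = complex_of_real r"
    using cinner_self_real_nonneg[of x] by (simp add: r_def complex_eq_iff)
  have "r \<noteq> 0"
    using assms cinner_eq_zero_iff[of x] xx by auto
  then have "r > 0"
    using cinner_self_real_nonneg[of x] r_def by linarith
  then have "cinner (complex_of_real (1 / sqrt r) *\<^sub>C x) (complex_of_real (1 / sqrt r) *\<^sub>C x) = 1"
    by (simp add: cinner_scaleC_left cinner_scaleC_right xx flip: of_real_mult)
  then show ?thesis by blast
qed

lemma clinear_add: "clinear T \<Longrightarrow> T (x + y) = T x + T y"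
  unfolding clinear_def by auto

lemma clinear_scaleC: "clinear T \<Longrightarrow> T (a *\<^sub>C x) = a *\<^sub>C T x"
  unfolding clinear_def by auto

lemma clinear_zero: "clinear T \<Longrightarrow> T 0 = 0"
  by (metis clinear_scaleC scaleC_zero_left)

lemma clinear_sum: "clinear T \<Longrightarrow> T (sum f S) = (\<Sum>i\<in>S. T (f i))"
  by (induction S rule: infinite_finite_induct) (auto simp: clinear_zero clinear_add)

lemma selfadjoint_op_clinear: "selfadjoint_op T \<Longrightarrow> clinear T"
  unfolding selfadjoint_op_def bounded_clinear_op_def by blast

lemma norm_selfadjoint_idempotent_le:
  fixes P :: "'a::complex_inner \<Rightarrow> 'a"
  assumes adj: "\<And>y z. cinner (P y) z = cinner y (P z)" and idem: "\<And>y. P (P y) = P y"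
  shows "norm (P y) \<le> norm y"
proof -
  define r where "r = y - P y"
  have Pr: "cinner (P y) r = 0"
    unfolding r_def cinner_diff_right by (metis adj idem diff_self)
  have y: "y = P y + r" unfolding r_def by simp
  have "cinner y y = cinner (P y) (P y) + cinner r r"
    using Pr cinner_eq_zero_sym[OF Pr]
    by (subst (1 2) y) (simp add: cinner_add_left cinner_add_right)
  then have "Re (cinner (P y) (P y)) \<le> Re (cinner y y)"
    using cinner_self_real_nonneg[of r] by simp
  then show ?thesis by (simp add: norm_eq_sqrt_cinner)
qed

section \<open>Orthogonal vectors and orthonormal families\<close>

lemma underdetermined_homogeneous_system_nontrivial:
  fixes M :: "'r \<Rightarrow> 'i \<Rightarrow> 'f::field"
  assumes "finite R" "finite I" "card R < card I"
  shows "\<exists>c. (\<exists>i\<in>I. c i \<noteq> 0) \<and> (\<forall>r\<in>R. (\<Sum>i\<in>I. M r i * c i) = 0)"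
  using assms
proof (induction R arbitrary: I M rule: finite_induct)
  case empty
  then show ?case by (intro exI[of _ "\<lambda>_. 1"]) (auto simp: card_gt_0_iff)
next
  case (insert r0 R I M)
  show ?case
  proof (cases "\<forall>i\<in>I. M r0 i = 0")
    case True
    with insert show ?thesis by fastforce
  next
    case False
    then obtain p where p: "p \<in> I" "M r0 p \<noteq> 0" by auto
    define I' where "I' = I - {p}"
    \<comment> \<open>Gaussian elimination: eliminate the unknown at \<open>p\<close> using the equation \<open>r0\<close>.\<close>
    define M' where "M' = (\<lambda>r i. M r i - M r p * M r0 i / M r0 p)"
    have "finite I'" "card R < card I'"
      using insert p by (auto simp: I'_def card_Diff_singleton)
    from insert.IH[OF this, of M'] obtain c' where
      c': "\<exists>i\<in>I'. c' i \<noteq> 0" "\<forall>r\<in>R. (\<Sum>i\<in>I'. M' r i * c' i) = 0" by auto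
    define S where "S = (\<Sum>i\<in>I'. M r0 i * c' i)"
    define c where "c = c'(p := - S / M r0 p)"
    have split: "(\<Sum>i\<in>I. M r i * c i) = M r p * c p + (\<Sum>i\<in>I'. M r i * c' i)" for r
    proof -
      have "(\<Sum>i\<in>I. M r i * c i) = M r p * c p + (\<Sum>i\<in>I'. M r i * c i)"
        unfolding I'_def using p insert.prems by (simp add: sum.remove)
      also have "(\<Sum>i\<in>I'. M r i * c i) = (\<Sum>i\<in>I'. M r i * c' i)"
        by (rule sum.cong) (auto simp: c_def I'_def)
      finally show ?thesis .
    qed
    have "(\<Sum>i\<in>I. M r i * c i) = 0" if "r \<in> R" for r
    proof -
      have "(\<Sum>i\<in>I. M r i * c i) = (\<Sum>i\<in>I'. M' r i * c' i)"
        unfolding split M'_def using p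
        by (simp add: c_def S_def algebra_simps sum_subtractf sum_distrib_left sum_divide_distrib)
      then show ?thesis using c'(2) that by auto
    qed
    moreover have "\<exists>i\<in>I. c i \<noteq> 0" "(\<Sum>i\<in>I. M r0 i * c i) = 0"
      using c'(1) p unfolding split S_def[symmetric] by (auto simp: c_def I'_def)
    ultimately show ?thesis by (intro exI[of _ c]) auto
  qed
qed

lemma cspan_fin_orthogonal_nonzero:
  fixes B V :: "'a::complex_inner set"
  assumes "finite B" "cindependent_fin B" "finite V" "card V < card B"
  shows "\<exists>x \<in> cspan_fin B. x \<noteq> 0 \<and> (\<forall>v\<in>V. cinner v x = 0)"
proof -
  obtain c where c: "\<exists>b\<in>B. c b \<noteq> 0" "\<forall>v\<in>V. (\<Sum>b\<in>B. cinner v b * c b) = 0"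
    using underdetermined_homogeneous_system_nontrivial[OF assms(3,1,4), of cinner] by auto
  define x where "x = (\<Sum>b\<in>B. c b *\<^sub>C b)"
  have "x \<in> cspan_fin B" unfolding x_def cspan_fin_def by auto
  moreover have "x \<noteq> 0" using assms(2) c(1) unfolding cindependent_fin_def x_def by auto
  moreover have "cinner v x = 0" if "v \<in> V" for v
    using c(2) that unfolding x_def by (simp add: cinner_sum_right cinner_scaleC_right mult.commute)
  ultimately show ?thesis by blast
qed

definition orthonormal :: "(nat \<Rightarrow> 'a::complex_inner) \<Rightarrow> nat \<Rightarrow> bool" where
  "orthonormal x k \<longleftrightarrow> (\<forall>i<k. \<forall>l<k. cinner (x i) (x l) = (if i = l then 1 else 0))"

definition oproj :: "(nat \<Rightarrow> 'a::complex_inner) \<Rightarrow> nat \<Rightarrow> 'a \<Rightarrow> 'a" where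
  "oproj x k y = (\<Sum>i<k. cinner (x i) y *\<^sub>C x i)"

lemma orthonormal_inj_on: "orthonormal x k \<Longrightarrow> inj_on x {..<k}"
  unfolding orthonormal_def inj_on_def by (metis lessThan_iff one_neq_zero)

lemma clinear_oproj: "clinear (oproj x k)"
  unfolding clinear_def oproj_def
  by (auto simp: cinner_add_right scaleC_add_left sum.distrib cinner_scaleC_right
      scaleC_sum_right scaleC_scaleC)

lemma cinner_oproj_adjoint: "cinner (oproj x k y) z = cinner y (oproj x k z)"
  unfolding oproj_def
  by (auto simp: cinner_sum_left cinner_sum_right cinner_scaleC_left cinner_scaleC_right
      intro!: sum.cong)

lemma oproj_orthonormal_member:
  assumes "orthonormal x k" "l < k"
  shows "oproj x k (x l) = x l"
proof -
  have "oproj x k (x l) = (\<Sum>i<k. (if i = l then x l else 0))"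
    unfolding oproj_def using assms unfolding orthonormal_def
    by (intro sum.cong) (auto simp: scaleC_one)
  then show ?thesis using assms(2) by simp
qed

lemma oproj_idempotent:
  assumes "orthonormal x k"
  shows "oproj x k (oproj x k y) = oproj x k y"
proof -
  have "oproj x k (oproj x k y) = (\<Sum>i<k. cinner (x i) y *\<^sub>C oproj x k (x i))"
    by (subst (2) oproj_def) (simp add: clinear_sum[OF clinear_oproj] clinear_scaleC[OF clinear_oproj])
  also have "\<dots> = oproj x k y"
    using oproj_orthonormal_member[OF assms] by (auto simp: oproj_def intro!: sum.cong)
  finally show ?thesis .
qed

lemma cindependent_fin_orthonormal:
  assumes "orthonormal x k"
  shows "cindependent_fin (x ` {..<k})"
  unfolding cindependent_fin_def
proof (intro allI impI ballI)
  fix c b assume sum0: "(\<Sum>b\<in>x ` {..<k}. c b *\<^sub>C b) = 0" and "b \<in> x ` {..<k}"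
  then obtain l where l: "l < k" "b = x l" by auto
  have "0 = cinner b (\<Sum>b\<in>x ` {..<k}. c b *\<^sub>C b)" using sum0 by simp
  also have "\<dots> = (\<Sum>i<k. c (x i) * cinner (x l) (x i))"
    by (simp add: sum.reindex[OF orthonormal_inj_on[OF assms]] cinner_sum_right
        cinner_scaleC_right l)
  also have "\<dots> = (\<Sum>i<k. if i = l then c (x l) else 0)"
    using assms l unfolding orthonormal_def by (intro sum.cong) auto
  also have "\<dots> = c b" using l by simp
  finally show "c b = 0" by simp
qed

lemma range_oproj:
  assumes "orthonormal x k"
  shows "range (oproj x k) = cspan_fin (x ` {..<k})"
proof
  have inj: "inj_on x {..<k}" by (rule orthonormal_inj_on[OF assms])
  show "range (oproj x k) \<subseteq> cspan_fin (x ` {..<k})"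
  proof
    fix z assume "z \<in> range (oproj x k)"
    then obtain y where "z = oproj x k y" by auto
    then have "z = (\<Sum>b\<in>x ` {..<k}. cinner b y *\<^sub>C b)"
      by (simp add: oproj_def sum.reindex[OF inj])
    then show "z \<in> cspan_fin (x ` {..<k})" unfolding cspan_fin_def by auto
  qed
  show "cspan_fin (x ` {..<k}) \<subseteq> range (oproj x k)"
  proof
    fix z assume "z \<in> cspan_fin (x ` {..<k})"
    then obtain c where z: "z = (\<Sum>b\<in>x ` {..<k}. c b *\<^sub>C b)" unfolding cspan_fin_def by auto
    have "oproj x k z = (\<Sum>b\<in>x ` {..<k}. c b *\<^sub>C oproj x k b)"
      unfolding z by (simp add: clinear_sum[OF clinear_oproj] clinear_scaleC[OF clinear_oproj])
    also have "\<dots> = z"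
      unfolding z using oproj_orthonormal_member[OF assms] by (intro sum.cong) auto
    finally show "z \<in> range (oproj x k)" by (metis rangeI)
  qed
qed

lemma rank_proj_oproj:
  assumes "orthonormal x k"
  shows "rank_proj k (oproj x k)"
proof -
  have "\<forall>y. norm (oproj x k y) \<le> 1 * norm y"
    using norm_selfadjoint_idempotent_le[of "oproj x k", OF cinner_oproj_adjoint oproj_idempotent[OF assms]]
    by simp
  then have "selfadjoint_op (oproj x k)"
    unfolding selfadjoint_op_def bounded_clinear_op_def
    by (metis clinear_oproj cinner_oproj_adjoint)
  moreover have "card (x ` {..<k}) = k"
    using orthonormal_inj_on[OF assms] by (simp add: card_image)
  ultimately show ?thesis
    unfolding rank_proj_def
    using oproj_idempotent[OF assms] cindependent_fin_orthonormal[OF assms] range_oproj[OF assms]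
    by blast
qed

section \<open>The joint rank-\<open>k\<close> numerical range\<close>

lemma rank_proj_clinear: "rank_proj n P \<Longrightarrow> clinear P"
  unfolding rank_proj_def by (blast intro: selfadjoint_op_clinear)

lemma rank_proj_orthonormal_orthogonal:
  fixes P :: "'a::complex_inner \<Rightarrow> 'a"
  assumes P: "rank_proj n P" and "finite V" and "card V + k \<le> n"
  shows "\<exists>u. orthonormal u k \<and> (\<forall>i<k. u i \<in> range P \<and> (\<forall>v\<in>V. cinner v (u i) = 0))"
  using assms(3)
proof (induction k)
  case 0
  then show ?case by (auto simp: orthonormal_def)
next
  case (Suc k)
  then obtain u where u: "orthonormal u k" "\<forall>i<k. u i \<in> range P \<and> (\<forall>v\<in>V. cinner v (u i) = 0)"
    by auto
  obtain B where B: "finite B" "card B = n" "cindependent_fin B" "range P = cspan_fin B"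
    using P unfolding rank_proj_def by auto
  define V' where "V' = V \<union> u ` {..<k}"
  have "card V' \<le> card V + k"
    unfolding V'_def using card_Un_le[of V "u ` {..<k}"] card_image_le[of "{..<k}" u] by simp
  then obtain x where x: "x \<in> range P" "x \<noteq> 0" "\<forall>v\<in>V'. cinner v x = 0"
    using cspan_fin_orthogonal_nonzero[of B V'] B Suc.prems \<open>finite V\<close> by (auto simp: V'_def)
  obtain a where a: "cinner (complex_of_real a *\<^sub>C x) (complex_of_real a *\<^sub>C x) = 1"
    using exists_real_scaleC_unit[OF x(2)] by auto
  define y where "y = complex_of_real a *\<^sub>C x"
  have y_range: "y \<in> range P"
    using x(1) clinear_scaleC[OF rank_proj_clinear[OF P]] unfolding y_def by (metis rangeE rangeI)
  have y_perp: "cinner v y = 0" if "v \<in> V'" for v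
    using x(3) that unfolding y_def by (simp add: cinner_scaleC_right)
  moreover have "orthonormal (u(k := y)) (Suc k)"
    using u(1) a y_perp cinner_eq_zero_sym[OF y_perp]
    unfolding orthonormal_def V'_def y_def by (auto simp: less_Suc_eq)
  moreover have "\<forall>i<Suc k. (u(k := y)) i \<in> range P \<and> (\<forall>v\<in>V. cinner v ((u(k := y)) i) = 0)"
    using u(2) y_range y_perp by (auto simp: less_Suc_eq V'_def)
  ultimately show ?case by blast
qed

lemma cinner_compression_orthonormal:
  assumes P: "rank_proj n P" and compress: "\<forall>x. P (T (P x)) = c *\<^sub>C P x"
    and u: "orthonormal u k" "\<forall>i<k. u i \<in> range P" and "i < k" "l < k"
  shows "cinner (u i) (T (u l)) = (if i = l then c else 0)"
proof -
  have idem: "\<And>x. P (P x) = P x" and adj: "\<And>x y. cinner (P x) y = cinner x (P y)"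
    using P unfolding rank_proj_def selfadjoint_op_def by auto
  have fix_i: "P (u i) = u i" and fix_l: "P (u l) = u l"
    using u(2) \<open>i < k\<close> \<open>l < k\<close> idem by (metis rangeE)+
  have "cinner (u i) (T (u l)) = cinner (u i) (P (T (P (u l))))"
    by (metis adj fix_i fix_l)
  also have "\<dots> = c * cinner (u i) (u l)"
    using compress[rule_format, of "u l"] by (simp add: fix_l cinner_scaleC_right)
  finally show ?thesis
    using u(1) \<open>i < k\<close> \<open>l < k\<close> unfolding orthonormal_def by simp
qed

lemma joint_rank_k_nr_orthonormalI:
  fixes A :: "'m::finite \<Rightarrow> 'a::complex_inner \<Rightarrow> 'a"
  assumes x: "orthonormal x k" and A: "\<And>j. clinear (A j)"
    and compress: "\<And>j i l. i < k \<Longrightarrow> l < k \<Longrightarrow>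
      cinner (x i) (A j (x l)) = (if i = l then complex_of_real (a $ j) else 0)"
  shows "a \<in> joint_rank_k_nr k A"
  unfolding joint_rank_k_nr_def
proof (intro CollectI exI conjI allI)
  show "rank_proj k (oproj x k)" by (rule rank_proj_oproj[OF x])
  fix j y
  have "oproj x k (A j (oproj x k y))
      = (\<Sum>i<k. cinner (x i) (\<Sum>l<k. cinner (x l) y *\<^sub>C A j (x l)) *\<^sub>C x i)"
    by (simp add: oproj_def clinear_sum[OF A] clinear_scaleC[OF A])
  also have "\<dots> = (\<Sum>i<k. (complex_of_real (a $ j) * cinner (x i) y) *\<^sub>C x i)"
  proof (intro sum.cong refl)
    fix i assume i: "i \<in> {..<k}"
    have "cinner (x i) (\<Sum>l<k. cinner (x l) y *\<^sub>C A j (x l))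
        = (\<Sum>l<k. if l = i then cinner (x i) y * complex_of_real (a $ j) else 0)"
      using i compress unfolding cinner_sum_right by (intro sum.cong) (auto simp: cinner_scaleC_right)
    then show "cinner (x i) (\<Sum>l<k. cinner (x l) y *\<^sub>C A j (x l)) *\<^sub>C x i
        = (complex_of_real (a $ j) * cinner (x i) y) *\<^sub>C x i"
      using i by (simp add: mult.commute)
  qed
  also have "\<dots> = complex_of_real (a $ j) *\<^sub>C oproj x k y"
    unfolding oproj_def by (simp add: scaleC_sum_right scaleC_scaleC)
  finally show "oproj x k (A j (oproj x k y)) = complex_of_real (a $ j) *\<^sub>C oproj x k y" .
qed

lemma joint_rank_k_nr_antimono:
  fixes A :: "'m::finite \<Rightarrow> 'a::complex_inner \<Rightarrow> 'a"
  assumes "\<And>j. selfadjoint_op (A j)" and "k \<le> n"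
  shows "joint_rank_k_nr n A \<subseteq> joint_rank_k_nr k A"
proof
  fix c assume "c \<in> joint_rank_k_nr n A"
  then obtain P where P: "rank_proj n P" "\<forall>j x. P (A j (P x)) = complex_of_real (c $ j) *\<^sub>C P x"
    unfolding joint_rank_k_nr_def by auto
  obtain u where u: "orthonormal u k" "\<forall>i<k. u i \<in> range P"
    using rank_proj_orthonormal_orthogonal[OF P(1), of "{}" k] \<open>k \<le> n\<close> by auto
  show "c \<in> joint_rank_k_nr k A"
    using cinner_compression_orthonormal[OF P(1) _ u] P(2)
    by (intro joint_rank_k_nr_orthonormalI[OF u(1)] selfadjoint_op_clinear assms(1)) blast
qed

lemma joint_rank_k_nr_orthogonal_combination:
  fixes A :: "'m::finite \<Rightarrow> 'a::complex_inner \<Rightarrow> 'a"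
  assumes A: "\<And>j. selfadjoint_op (A j)"
    and u: "orthonormal u k" and w: "orthonormal w k"
    and uAu: "\<And>j i l. i < k \<Longrightarrow> l < k \<Longrightarrow>
      cinner (u i) (A j (u l)) = (if i = l then complex_of_real (c $ j) else 0)"
    and wAw: "\<And>j i l. i < k \<Longrightarrow> l < k \<Longrightarrow>
      cinner (w i) (A j (w l)) = (if i = l then complex_of_real (b $ j) else 0)"
    and perp: "\<And>j i l. i < k \<Longrightarrow> l < k \<Longrightarrow> cinner (w i) (u l) = 0 \<and> cinner (A j (w i)) (u l) = 0"
    and "0 \<le> t" "t \<le> 1"
  shows "(1 - t) *\<^sub>R c + t *\<^sub>R b \<in> joint_rank_k_nr k A"
proof -
  have cl: "clinear (A j)" for j by (rule selfadjoint_op_clinear[OF A])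
  define s1 where "s1 = sqrt (1 - t)"
  define s2 where "s2 = sqrt t"
  have s1: "s1 * s1 = 1 - t" and s2: "s2 * s2 = t"
    unfolding s1_def s2_def using \<open>0 \<le> t\<close> \<open>t \<le> 1\<close> by simp_all
  define x where "x = (\<lambda>i. complex_of_real s1 *\<^sub>C u i + complex_of_real s2 *\<^sub>C w i)"
  have cross: "cinner (w i) (u l) = 0" "cinner (u i) (w l) = 0"
    "cinner (u i) (A j (w l)) = 0" "cinner (w i) (A j (u l)) = 0"
    if "i < k" "l < k" for i l j
  proof -
    show "cinner (w i) (u l) = 0" "cinner (u i) (w l) = 0" "cinner (u i) (A j (w l)) = 0"
      using perp[OF that] perp[OF that(2,1)] by (auto intro: cinner_eq_zero_sym)
    show "cinner (w i) (A j (u l)) = 0"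
      using perp[OF that] A[of j] unfolding selfadjoint_op_def by metis
  qed
  have "orthonormal x k"
    unfolding orthonormal_def
  proof (intro allI impI)
    fix i l assume "i < k" "l < k"
    then show "cinner (x i) (x l) = (if i = l then 1 else 0)"
      using u w cross[OF \<open>i < k\<close> \<open>l < k\<close>]
      by (simp add: x_def cinner_real_combination s1 s2 orthonormal_def)
  qed
  then show ?thesis
  proof (rule joint_rank_k_nr_orthonormalI[OF _ cl])
    fix j i l assume "i < k" "l < k"
    have "A j (x l) = complex_of_real s1 *\<^sub>C A j (u l) + complex_of_real s2 *\<^sub>C A j (w l)"
      unfolding x_def by (simp add: clinear_add[OF cl] clinear_scaleC[OF cl])
    then have "cinner (x i) (A j (x l))
      = complex_of_real (1 - t) * cinner (u i) (A j (u l)) + complex_of_real t * cinner (w i) (A j (w l))"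
      using cross[OF \<open>i < k\<close> \<open>l < k\<close>] by (simp add: x_def cinner_real_combination s1 s2)
    also have "\<dots> = (if i = l then complex_of_real (((1 - t) *\<^sub>R c + t *\<^sub>R b) $ j) else 0)"
      unfolding uAu[OF \<open>i < k\<close> \<open>l < k\<close>] wAw[OF \<open>i < k\<close> \<open>l < k\<close>]
      by (cases "i = l") (simp_all add: algebra_simps)
    finally show "cinner (x i) (A j (x l))
      = (if i = l then complex_of_real (((1 - t) *\<^sub>R c + t *\<^sub>R b) $ j) else 0)" .
  qed
qed

lemma joint_rank_k_nr_segment:
  fixes A :: "'m::finite \<Rightarrow> 'a::complex_inner \<Rightarrow> 'a"
  assumes A: "\<And>j. selfadjoint_op (A j)" and n: "(CARD('m) + 2) * k \<le> n"
    and c: "c \<in> joint_rank_k_nr n A" and b: "b \<in> joint_rank_k_nr k A"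
  shows "closed_segment c b \<subseteq> joint_rank_k_nr k A"
proof
  fix q assume "q \<in> closed_segment c b"
  then obtain t where t: "0 \<le> t" "t \<le> 1" "q = (1 - t) *\<^sub>R c + t *\<^sub>R b"
    unfolding closed_segment_def by blast
  obtain P where P: "rank_proj n P" "\<forall>j x. P (A j (P x)) = complex_of_real (c $ j) *\<^sub>C P x"
    using c unfolding joint_rank_k_nr_def by auto
  obtain Q where Q: "rank_proj k Q" "\<forall>j x. Q (A j (Q x)) = complex_of_real (b $ j) *\<^sub>C Q x"
    using b unfolding joint_rank_k_nr_def by auto
  obtain w where w: "orthonormal w k" "\<forall>i<k. w i \<in> range Q"
    using rank_proj_orthonormal_orthogonal[OF Q(1), of "{}" k] by auto
  define V where "V = w ` {..<k} \<union> (\<Union>j. (\<lambda>i. A j (w i)) ` {..<k})"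
  have "card (\<Union>j. (\<lambda>i. A j (w i)) ` {..<k}) \<le> (\<Sum>j\<in>(UNIV::'m set). card ((\<lambda>i. A j (w i)) ` {..<k}))"
    by (rule card_UN_le) simp
  also have "\<dots> \<le> (\<Sum>j\<in>(UNIV::'m set). k)"
    by (intro sum_mono) (metis card_image_le card_lessThan finite_lessThan)
  finally have "card V + k \<le> n"
    using card_Un_le[of "w ` {..<k}" "\<Union>j. (\<lambda>i. A j (w i)) ` {..<k}"]
      card_image_le[of "{..<k}" w] n
    unfolding V_def by (simp add: algebra_simps)
  moreover have "finite V" unfolding V_def by simp
  ultimately obtain u where u: "orthonormal u k" "\<forall>i<k. u i \<in> range P \<and> (\<forall>v\<in>V. cinner v (u i) = 0)"
    using rank_proj_orthonormal_orthogonal[OF P(1)] by blast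
  show "q \<in> joint_rank_k_nr k A"
    unfolding t(3)
  proof (rule joint_rank_k_nr_orthogonal_combination[OF A u(1) w(1) _ _ _ t(1,2)])
    show "cinner (u i) (A j (u l)) = (if i = l then complex_of_real (c $ j) else 0)"
      if "i < k" "l < k" for j i l
      using cinner_compression_orthonormal[OF P(1) _ u(1) _ that] P(2) u(2) by blast
    show "cinner (w i) (A j (w l)) = (if i = l then complex_of_real (b $ j) else 0)"
      if "i < k" "l < k" for j i l
      using cinner_compression_orthonormal[OF Q(1) _ w that] Q(2) by blast
    show "cinner (w i) (u l) = 0 \<and> cinner (A j (w i)) (u l) = 0"
      if "i < k" "l < k" for j i l
      using u(2) that unfolding V_def by blast
  qed
qed

section \<open>Star centers\<close>

lemma star_center_convex_combination:
  assumes c1: "star_center S c1" and c2: "star_center S c2" and "0 \<le> l" "l \<le> 1"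
  shows "star_center S ((1 - l) *\<^sub>R c1 + l *\<^sub>R c2)"
proof -
  define c where "c = (1 - l) *\<^sub>R c1 + l *\<^sub>R c2"
  have "c \<in> closed_segment c1 c2"
    unfolding c_def closed_segment_def using \<open>0 \<le> l\<close> \<open>l \<le> 1\<close> by blast
  then have cS: "c \<in> S" using c1 c2 unfolding star_center_def by blast
  have "q \<in> S" if bS: "b \<in> S" and "q \<in> closed_segment c b" for b q
  proof -
    obtain s where s: "0 \<le> s" "s \<le> 1" "q = (1 - s) *\<^sub>R c + s *\<^sub>R b"
      using \<open>q \<in> closed_segment c b\<close> unfolding closed_segment_def by blast
    \<comment> \<open>\<open>q\<close> lies on the segment from \<open>c2\<close> to the point \<open>p\<close> of the segment from \<open>c1\<close> to \<open>b\<close>,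
      at parameter \<open>D\<close>.\<close>
    define D where "D = (1 - s) * (1 - l) + s"
    show "q \<in> S"
    proof (cases "D = 0")
      case True
      then have "s = 0"
        using s \<open>0 \<le> l\<close> \<open>l \<le> 1\<close> unfolding D_def by (smt (verit) mult_nonneg_nonneg)
      then show ?thesis using s cS by simp
    next
      case False
      have D: "s \<le> D" "D \<le> 1"
        unfolding D_def using s \<open>0 \<le> l\<close> \<open>l \<le> 1\<close> mult_left_le[of "1 - l" "1 - s"] by simp_all
      define p where "p = (1 - s / D) *\<^sub>R c1 + (s / D) *\<^sub>R b"
      have "0 \<le> s / D" "s / D \<le> 1"
        using D False s by simp_all
      then have "p \<in> closed_segment c1 b"
        unfolding p_def closed_segment_def by blast
      then have pS: "p \<in> S" using c1 bS unfolding star_center_def by blast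
      have "D *\<^sub>R p = (D - s) *\<^sub>R c1 + s *\<^sub>R b"
        using False by (simp add: p_def scaleR_add_right right_diff_distrib)
      then have "q = (1 - D) *\<^sub>R c2 + D *\<^sub>R p"
        unfolding s(3) c_def by (simp add: D_def algebra_simps)
      moreover have "(1 - D) *\<^sub>R c2 + D *\<^sub>R p \<in> closed_segment c2 p"
        unfolding closed_segment_def using D s by auto
      ultimately show ?thesis using c2 pS unfolding star_center_def by blast
    qed
  qed
  then show ?thesis using cS unfolding star_center_def c_def by blast
qed

lemma convex_star_centers: "convex {c. star_center S c}"
  unfolding convex_alt using star_center_convex_combination by blast

lemma star_center_closure:
  fixes H L :: "'a::real_normed_vector set"
  assumes "H \<subseteq> L" and visible: "\<And>c b. c \<in> H \<Longrightarrow> b \<in> L \<Longrightarrow> closed_segment c b \<subseteq> L"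
    and "c \<in> closure H"
  shows "star_center (closure L) c"
  unfolding star_center_def
proof (intro conjI ballI subsetI)
  show "c \<in> closure L" using closure_mono[OF \<open>H \<subseteq> L\<close>] \<open>c \<in> closure H\<close> by blast
  fix b q assume "b \<in> closure L" "q \<in> closed_segment c b"
  then obtain u where u: "0 \<le> u" "u \<le> 1" "q = (1 - u) *\<^sub>R c + u *\<^sub>R b"
    unfolding closed_segment_def by blast
  define f where "f = (\<lambda>z. (1 - u) *\<^sub>R fst z + u *\<^sub>R snd z :: 'a)"
  have "f ` (H \<times> L) \<subseteq> closure L"
    using visible u(1,2) closure_subset unfolding f_def closed_segment_def by fastforce
  moreover have "continuous_on (closure (H \<times> L)) f"
    unfolding f_def by (intro continuous_intros)
  ultimately have "f ` closure (H \<times> L) \<subseteq> closure L"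
    by (intro image_closure_subset) auto
  then show "q \<in> closure L"
    using \<open>c \<in> closure H\<close> \<open>b \<in> closure L\<close> by (force simp: closure_Times f_def u(3))
qed

theorem corollary3p2:
  fixes A :: "'m::finite \<Rightarrow> 'a::{complex_inner, complete_space} \<Rightarrow> 'a"
    and k khat :: nat
  assumes "\<And>j. selfadjoint_op (A j)"
    and "k > 0"
    and "khat \<ge> (CARD('m) + 2) * k"
    and "closure (joint_rank_k_nr khat A) \<noteq> {}"
  shows "star_shaped (closure (joint_rank_k_nr k A))
    \<and> convex hull (closure (joint_rank_k_nr khat A)) \<subseteq> closure (joint_rank_k_nr k A)
    \<and> (\<forall>c \<in> convex hull (closure (joint_rank_k_nr khat A)).
          star_center (closure (joint_rank_k_nr k A)) c)"
proof -
  let ?L = "joint_rank_k_nr k A" and ?H = "joint_rank_k_nr khat A"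
  have "k \<le> khat" using assms(3) by (simp add: algebra_simps)
  then have "?H \<subseteq> ?L" by (rule joint_rank_k_nr_antimono[OF assms(1)])
  then have center: "star_center (closure ?L) c" if "c \<in> closure ?H" for c
    using joint_rank_k_nr_segment[OF assms(1,3)] that by (rule star_center_closure)
  have "convex hull (closure ?H) \<subseteq> {c. star_center (closure ?L) c}"
    using center convex_star_centers by (intro hull_minimal) auto
  moreover have "{c. star_center (closure ?L) c} \<subseteq> closure ?L"
    by (auto simp: star_center_def)
  moreover obtain c0 where "c0 \<in> closure ?H"
    using assms(4) by (meson ex_in_conv)
  then have "star_shaped (closure ?L)"
    unfolding star_shaped_def using center by blast
  ultimately show ?thesis by blast
qed

end
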